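(* Let $K$ be either of the (two non-isomorphic) $2$-uniform tilings of the plane whose vertex types are $[3^3,4^2]$ and $[4^4]$. If $X$ is a map on the torus that is a quotient $X=K/\Gamma$ of $K$, then the vertices of $X$ form exactly $2$ orbits under ${\rm Aut}(X)$.
   Context: A map is a polyhedral map: a cellular embedding of a connected graph in a closed surface such that the intersection of any two distinct faces is empty, a single vertex, or a single edge. For a vertex $u$, the faces containing $u$ form a cyclic sequence (the face-cycle at $u$); if this cyclic sequence consists of consecutive blocks of $n_1$ $p_1$-gons, then $n_2$ $p_2$-gons, ..., then $n_k$ $p_k$-gons, with cyclically consecutive $p_i$ distinct, then $u$ is said to have type $[p_1^{n_1},\dots,p_k^{n_k}]$ (defined up to cyclic shift and reversal). A $2$-uniform tiling is an edge-to-edge tiling of the Euclidean plane $\mathbb{R}^2$ by regular polygons whose symmetry group has exactly two orbits on the set of vertices; viewed as a map on the plane, its vertices have (at most) two types, listed as $[W;Z]$. (Up to isomorphism there are exactly $20$ such tilings.) For a map $K$ on the plane, a quotient of $K$ on the torus is a map $X$ on the torus together with a polyhedral covering map $\eta:K\to X$ with $X=K/\Gamma$, where $\Gamma\le {\rm Aut}(K)$ is a subgroup acting without fixed vertices, edges or faces and $K/\Gamma$ is homeomorphic to the torus. ${\rm Aut}(X)$ denotes the automorphism group of the map $X$, acting on its vertex set $V(X)$. *)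

theory Defs
  imports Main
begin

text \<open>
  Vertices are the points (i, y) of int x int; row y is a horizontal line of
  vertices.  The horizontal strip between rows y and y+1 is a strip of
  triangles iff y mod (k+1) = k, otherwise it is a strip of unit squares.
  Crossing a triangle strip shifts the row by half an edge length, so in a
  triangle strip the vertex (i, y+1) lies above the midpoint of
  (i, y) and (i+1, y).  For k = 2 (two square strips per triangle strip) and
  k = 3 (three square strips per triangle strip) these are exactly the two
  non-isomorphic 2-uniform tilings with vertex types [3^3.4^2] and [4^4].
  Faces of a polyhedral map are recorded as their vertex sets, edges as
  2-element vertex sets (a polyhedral map is determined by this data).
\<close>

definition tri_layer :: "nat \<Rightarrow> int \<Rightarrow> bool" where
  "tri_layer k y \<longleftrightarrow> y mod (int k + 1) = int k"

definition KE :: "nat \<Rightarrow> (int \<times> int) set set" where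
  "KE k = {{(i, y), (i + 1, y)} | i y. True}
        \<union> {{(i, y), (i, y + 1)} | i y. True}
        \<union> {{(i + 1, y), (i, y + 1)} | i y. tri_layer k y}"

definition KF :: "nat \<Rightarrow> (int \<times> int) set set" where
  "KF k = {{(i, y), (i + 1, y), (i + 1, y + 1), (i, y + 1)} | i y. \<not> tri_layer k y}
        \<union> {{(i, y), (i + 1, y), (i, y + 1)} | i y. tri_layer k y}
        \<union> {{(i + 1, y), (i + 1, y + 1), (i, y + 1)} | i y. tri_layer k y}"

text \<open>Counter-clockwise oriented boundary darts (a, b, f): a \<rightarrow> b is a
  boundary edge of the face f traversed counter-clockwise.\<close>

definition KD :: "nat \<Rightarrow> ((int \<times> int) \<times> (int \<times> int) \<times> (int \<times> int) set) set" where
  "KD k =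
     {(a, b, f) | a b f i y. \<not> tri_layer k y \<and>
        f = {(i, y), (i + 1, y), (i + 1, y + 1), (i, y + 1)} \<and>
        (a, b) \<in> {((i, y), (i + 1, y)), ((i + 1, y), (i + 1, y + 1)),
                   ((i + 1, y + 1), (i, y + 1)), ((i, y + 1), (i, y))}}
   \<union> {(a, b, f) | a b f i y. tri_layer k y \<and>
        f = {(i, y), (i + 1, y), (i, y + 1)} \<and>
        (a, b) \<in> {((i, y), (i + 1, y)), ((i + 1, y), (i, y + 1)), ((i, y + 1), (i, y))}}
   \<union> {(a, b, f) | a b f i y. tri_layer k y \<and>
        f = {(i + 1, y), (i + 1, y + 1), (i, y + 1)} \<and>
        (a, b) \<in> {((i + 1, y), (i + 1, y + 1)), ((i + 1, y + 1), (i, y + 1)),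
                   ((i, y + 1), (i + 1, y))}}"

definition map_aut :: "'v set \<Rightarrow> 'v set set \<Rightarrow> 'v set set \<Rightarrow> ('v \<Rightarrow> 'v) \<Rightarrow> bool" where
  "map_aut V E F \<phi> \<longleftrightarrow> bij_betw \<phi> V V \<and> (\<lambda>e. \<phi> ` e) ` E = E \<and> (\<lambda>f. \<phi> ` f) ` F = F"

definition polyhedral_map :: "'v set \<Rightarrow> 'v set set \<Rightarrow> 'v set set \<Rightarrow> bool" where
  "polyhedral_map V E F \<longleftrightarrow>
     (\<forall>e\<in>E. e \<subseteq> V \<and> card e = 2) \<and>
     (\<forall>f\<in>F. f \<subseteq> V \<and> finite f \<and> card f \<ge> 3) \<and>
     (\<forall>f\<in>F. \<forall>g\<in>F. f \<noteq> g \<longrightarrow> f \<inter> g = {} \<or> card (f \<inter> g) = 1 \<or> f \<inter> g \<in> E)"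

definition orientation_preserving :: "nat \<Rightarrow> (int \<times> int \<Rightarrow> int \<times> int) \<Rightarrow> bool" where
  "orientation_preserving k \<gamma> \<longleftrightarrow>
     (\<forall>(a, b, f)\<in>KD k. (\<gamma> a, \<gamma> b, \<gamma> ` f) \<in> KD k)"

text \<open>Gamma is a subgroup of Aut(K) acting without fixed vertices, edges and
  faces such that K/Gamma is a torus (equivalently, for a free action on the
  plane: finitely many vertex orbits and Gamma orientation preserving).\<close>

definition torus_group :: "nat \<Rightarrow> (int \<times> int \<Rightarrow> int \<times> int) set \<Rightarrow> bool" where
  "torus_group k \<Gamma> \<longleftrightarrow>
     (\<forall>\<gamma>\<in>\<Gamma>. map_aut UNIV (KE k) (KF k) \<gamma>) \<and>
     id \<in> \<Gamma> \<and> (\<forall>\<alpha>\<in>\<Gamma>. \<forall>\<beta>\<in>\<Gamma>. \<alpha> \<circ> \<beta> \<in> \<Gamma>) \<and> (\<forall>\<alpha>\<in>\<Gamma>. inv \<alpha> \<in> \<Gamma>) \<and>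
     (\<forall>\<gamma>\<in>\<Gamma>. \<gamma> \<noteq> id \<longrightarrow>
        (\<forall>v. \<gamma> v \<noteq> v) \<and> (\<forall>e\<in>KE k. \<gamma> ` e \<noteq> e) \<and> (\<forall>f\<in>KF k. \<gamma> ` f \<noteq> f)) \<and>
     (\<forall>\<gamma>\<in>\<Gamma>. orientation_preserving k \<gamma>) \<and>
     finite (UNIV // {(a, b). \<exists>\<gamma>\<in>\<Gamma>. \<gamma> a = b})"

definition quotient_map :: "nat \<Rightarrow> (int \<times> int \<Rightarrow> int \<times> int) set \<Rightarrow> (int \<times> int \<Rightarrow> 'v)
     \<Rightarrow> 'v set \<Rightarrow> 'v set set \<Rightarrow> 'v set set \<Rightarrow> bool" where
  "quotient_map k \<Gamma> \<eta> VX EdX FcX \<longleftrightarrow>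
     range \<eta> = VX \<and>
     (\<forall>a b. \<eta> a = \<eta> b \<longleftrightarrow> (\<exists>\<gamma>\<in>\<Gamma>. \<gamma> a = b)) \<and>
     EdX = (\<lambda>e. \<eta> ` e) ` KE k \<and>
     FcX = (\<lambda>f. \<eta> ` f) ` KF k \<and>
     (\<forall>f\<in>KF k. inj_on \<eta> f) \<and>
     polyhedral_map VX EdX FcX"

definition aut_orbit_rel :: "'v set \<Rightarrow> 'v set set \<Rightarrow> 'v set set \<Rightarrow> ('v \<times> 'v) set" where
  "aut_orbit_rel V E F = {(x, y). x \<in> V \<and> y \<in> V \<and> (\<exists>\<phi>. map_aut V E F \<phi> \<and> \<phi> x = y)}"

end

theory Submission
  imports Defs
begin

text \<open>An orientation-preserving automorphism of K that fixes both ends of an edge is the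
  identity: walking around the faces propagates fixed vertices along rows and from row to row.
  Hence every orientation-preserving automorphism of K is a translation (with vertical period
  k + 1) or a half-turn, and as every half-turn fixes a vertex, an edge or a face, the free
  group \<Gamma> consists of translations. All these translations and half-turns therefore descend to
  automorphisms of X = K/\<Gamma>, and for k = 2, 3 they act transitively on each of the two vertex
  types of K, the vertices on a triangle and the others. Automorphisms of X preserve face sizes,
  so the two types are exactly the Aut(X)-orbits.\<close>

section \<open>Faces and darts of the tiling\<close>

definition square :: "int \<Rightarrow> int \<Rightarrow> (int \<times> int) set" where
  "square i y = {(i, y), (i + 1, y), (i + 1, y + 1), (i, y + 1)}"

definition up_triangle :: "int \<Rightarrow> int \<Rightarrow> (int \<times> int) set" where
  "up_triangle i y = {(i, y), (i + 1, y), (i, y + 1)}"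

definition down_triangle :: "int \<Rightarrow> int \<Rightarrow> (int \<times> int) set" where
  "down_triangle i y = {(i + 1, y), (i + 1, y + 1), (i, y + 1)}"

lemma KF_iff:
  "f \<in> KF k \<longleftrightarrow>
     (\<exists>i y. \<not> tri_layer k y \<and> f = square i y) \<or>
     (\<exists>i y. tri_layer k y \<and> f = up_triangle i y) \<or>
     (\<exists>i y. tri_layer k y \<and> f = down_triangle i y)"
  unfolding KF_def square_def up_triangle_def down_triangle_def by blast

lemma KE_iff:
  "e \<in> KE k \<longleftrightarrow>
     (\<exists>i y. e = {(i, y), (i + 1, y)}) \<or> (\<exists>i y. e = {(i, y), (i, y + 1)}) \<or>
     (\<exists>i y. tri_layer k y \<and> e = {(i + 1, y), (i, y + 1)})"
  unfolding KE_def by blast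

definition cell_dart :: "nat \<Rightarrow> int \<Rightarrow> int \<Rightarrow> int \<times> int \<Rightarrow> int \<times> int \<Rightarrow> (int \<times> int) set \<Rightarrow> bool" where
  "cell_dart k i y a b f \<longleftrightarrow>
     (\<not> tri_layer k y \<and> f = square i y \<and>
        ((a, b) = ((i, y), (i + 1, y)) \<or> (a, b) = ((i + 1, y), (i + 1, y + 1)) \<or>
         (a, b) = ((i + 1, y + 1), (i, y + 1)) \<or> (a, b) = ((i, y + 1), (i, y)))) \<or>
     (tri_layer k y \<and> f = up_triangle i y \<and>
        ((a, b) = ((i, y), (i + 1, y)) \<or> (a, b) = ((i + 1, y), (i, y + 1)) \<or>
         (a, b) = ((i, y + 1), (i, y)))) \<or>
     (tri_layer k y \<and> f = down_triangle i y \<and>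
        ((a, b) = ((i + 1, y), (i + 1, y + 1)) \<or> (a, b) = ((i + 1, y + 1), (i, y + 1)) \<or>
         (a, b) = ((i, y + 1), (i + 1, y))))"

lemma KD_iff: "(a, b, f) \<in> KD k \<longleftrightarrow> (\<exists>i y. cell_dart k i y a b f)"
  unfolding KD_def cell_dart_def
  by (simp only: Un_iff mem_Collect_eq prod.inject insert_iff empty_iff simp_thms ex_simps
      ex_disj_distrib square_def up_triangle_def down_triangle_def conj_assoc disj_assoc)

lemma card_square [simp]: "card (square i y) = 4"
  by (simp add: square_def)

lemma card_up_triangle [simp]: "card (up_triangle i y) = 3"
  by (simp add: up_triangle_def)

lemma card_down_triangle [simp]: "card (down_triangle i y) = 3"
  by (simp add: down_triangle_def)

lemma square_eq_iff [simp]: "square i y = square j z \<longleftrightarrow> i = j \<and> y = z"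
proof
  assume eq: "square i y = square j z"
  have "(i, y) \<in> square j z" unfolding eq[symmetric] by (simp add: square_def)
  moreover have "(j, z) \<in> square i y" unfolding eq by (simp add: square_def)
  ultimately show "i = j \<and> y = z"
    unfolding square_def by auto
qed simp

lemma up_triangle_eq_iff [simp]: "up_triangle i y = up_triangle j z \<longleftrightarrow> i = j \<and> y = z"
proof
  assume eq: "up_triangle i y = up_triangle j z"
  have "(i, y) \<in> up_triangle j z" "(i + 1, y) \<in> up_triangle j z"
    unfolding eq[symmetric] by (simp_all add: up_triangle_def)
  moreover have "(j, z) \<in> up_triangle i y" unfolding eq by (simp add: up_triangle_def)
  ultimately show "i = j \<and> y = z"
    unfolding up_triangle_def by auto
qed simp

lemma down_triangle_eq_iff [simp]: "down_triangle i y = down_triangle j z \<longleftrightarrow> i = j \<and> y = z"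
proof
  assume eq: "down_triangle i y = down_triangle j z"
  have "(i, y + 1) \<in> down_triangle j z" "(i + 1, y) \<in> down_triangle j z"
    unfolding eq[symmetric] by (simp_all add: down_triangle_def)
  moreover have "(j, z + 1) \<in> down_triangle i y" unfolding eq by (simp add: down_triangle_def)
  ultimately show "i = j \<and> y = z"
    unfolding down_triangle_def by auto
qed simp

lemma up_triangle_neq_down_triangle [simp]: "up_triangle i y \<noteq> down_triangle j z"
proof
  assume eq: "up_triangle i y = down_triangle j z"
  have "(i, y) \<in> down_triangle j z" "(i + 1, y) \<in> down_triangle j z"
    "(i, y + 1) \<in> down_triangle j z"
    unfolding eq[symmetric] by (simp_all add: up_triangle_def)
  then show False
    unfolding down_triangle_def by auto
qed

lemma square_neq_triangle [simp]:
  "square i y \<noteq> up_triangle j z" "square i y \<noteq> down_triangle j z"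
  by (metis card_square card_up_triangle card_down_triangle numeral_eq_iff semiring_norm(88))+

lemma KD_face_unique: "(a, b, f) \<in> KD k \<Longrightarrow> (a, b, g) \<in> KD k \<Longrightarrow> f = g"
  unfolding KD_iff cell_dart_def by (elim disjE exE conjE; simp)

lemma KD_successor_unique: "(a, b, f) \<in> KD k \<Longrightarrow> (a, c, f) \<in> KD k \<Longrightarrow> b = c"
  unfolding KD_iff cell_dart_def
  by (elim disjE exE conjE; simp add: up_triangle_neq_down_triangle[symmetric]
      square_neq_triangle[symmetric])

lemma square_darts:
  assumes "\<not> tri_layer k y"
  shows "((i, y), (i + 1, y), square i y) \<in> KD k"
    and "((i + 1, y), (i + 1, y + 1), square i y) \<in> KD k"
    and "((i + 1, y + 1), (i, y + 1), square i y) \<in> KD k"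
    and "((i, y + 1), (i, y), square i y) \<in> KD k"
  using assms unfolding KD_iff cell_dart_def by blast+

lemma up_triangle_darts:
  assumes "tri_layer k y"
  shows "((i, y), (i + 1, y), up_triangle i y) \<in> KD k"
    and "((i + 1, y), (i, y + 1), up_triangle i y) \<in> KD k"
    and "((i, y + 1), (i, y), up_triangle i y) \<in> KD k"
  using assms unfolding KD_iff cell_dart_def by blast+

lemma down_triangle_darts:
  assumes "tri_layer k y"
  shows "((i + 1, y), (i + 1, y + 1), down_triangle i y) \<in> KD k"
    and "((i + 1, y + 1), (i, y + 1), down_triangle i y) \<in> KD k"
    and "((i, y + 1), (i + 1, y), down_triangle i y) \<in> KD k"
  using assms unfolding KD_iff cell_dart_def by blast+

section \<open>Rigidity of orientation-preserving maps\<close>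

lemma orientation_preserving_comp:
  assumes \<sigma>: "orientation_preserving k \<sigma>" and \<tau>: "orientation_preserving k \<tau>"
  shows "orientation_preserving k (\<sigma> \<circ> \<tau>)"
  unfolding orientation_preserving_def
proof clarify
  fix a b f assume "(a, b, f) \<in> KD k"
  then have "(\<tau> a, \<tau> b, \<tau> ` f) \<in> KD k" using \<tau> unfolding orientation_preserving_def by blast
  then have "(\<sigma> (\<tau> a), \<sigma> (\<tau> b), \<sigma> ` \<tau> ` f) \<in> KD k"
    using \<sigma> unfolding orientation_preserving_def by blast
  then show "((\<sigma> \<circ> \<tau>) a, (\<sigma> \<circ> \<tau>) b, (\<sigma> \<circ> \<tau>) ` f) \<in> KD k" by (simp add: image_comp)
qed

lemma orientation_preserving_fixes_next_vertex:
  assumes op: "orientation_preserving k \<delta>"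
    and ab: "(a, b, f) \<in> KD k" and bc: "(b, c, f) \<in> KD k"
    and "\<delta> a = a" "\<delta> b = b"
  shows "\<delta> c = c"
proof -
  have "(a, b, \<delta> ` f) \<in> KD k"
    using op ab \<open>\<delta> a = a\<close> \<open>\<delta> b = b\<close> unfolding orientation_preserving_def by fastforce
  then have "\<delta> ` f = f" using KD_face_unique ab by blast
  then have "(b, \<delta> c, f) \<in> KD k"
    using op bc \<open>\<delta> b = b\<close> unfolding orientation_preserving_def by fastforce
  then show ?thesis using KD_successor_unique bc by blast
qed

lemma orientation_preserving_fixed_edge_up:
  assumes op: "orientation_preserving k \<delta>"
    and fix0: "\<delta> (i, y) = (i, y)" and fix1: "\<delta> (i + 1, y) = (i + 1, y)"
  shows "\<delta> (i, y + 1) = (i, y + 1)" "\<delta> (i + 1, y + 1) = (i + 1, y + 1)"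
    "\<delta> (i + 1 + 1, y) = (i + 1 + 1, y)"
proof -
  note next_vertex = orientation_preserving_fixes_next_vertex[OF op]
  have "\<delta> (i, y + 1) = (i, y + 1) \<and> \<delta> (i + 1, y + 1) = (i + 1, y + 1) \<and>
    \<delta> (i + 1 + 1, y) = (i + 1 + 1, y)"
  proof (cases "tri_layer k y")
    case True
    note up = up_triangle_darts[OF True] and down = down_triangle_darts[OF True]
    have a: "\<delta> (i, y + 1) = (i, y + 1)" by (rule next_vertex[OF up(1,2) fix0 fix1])
    have b: "\<delta> (i + 1, y + 1) = (i + 1, y + 1)" by (rule next_vertex[OF down(3,1) a fix1])
    have "\<delta> (i + 1 + 1, y) = (i + 1 + 1, y)" by (rule next_vertex[OF up(3,1) b fix1])
    with a b show ?thesis by blast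
  next
    case False
    note sq = square_darts[OF False]
    have b: "\<delta> (i + 1, y + 1) = (i + 1, y + 1)" by (rule next_vertex[OF sq(1,2) fix0 fix1])
    have a: "\<delta> (i, y + 1) = (i, y + 1)" by (rule next_vertex[OF sq(2,3) fix1 b])
    have "\<delta> (i + 1 + 1, y) = (i + 1 + 1, y)" by (rule next_vertex[OF sq(4,1) b fix1])
    with a b show ?thesis by blast
  qed
  then show "\<delta> (i, y + 1) = (i, y + 1)" "\<delta> (i + 1, y + 1) = (i + 1, y + 1)"
    "\<delta> (i + 1 + 1, y) = (i + 1 + 1, y)" by blast+
qed

lemma orientation_preserving_fixed_edge_down:
  assumes op: "orientation_preserving k \<delta>"
    and fix0: "\<delta> (i, z + 1) = (i, z + 1)" and fix1: "\<delta> (i + 1, z + 1) = (i + 1, z + 1)"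
  shows "\<delta> (i, z) = (i, z)" "\<delta> (i + 1, z) = (i + 1, z)"
    "\<delta> (i - 1, z + 1) = (i - 1, z + 1)"
proof -
  note next_vertex = orientation_preserving_fixes_next_vertex[OF op]
  have "\<delta> (i, z) = (i, z) \<and> \<delta> (i + 1, z) = (i + 1, z) \<and> \<delta> (i - 1, z + 1) = (i - 1, z + 1)"
  proof (cases "tri_layer k z")
    case True
    note up = up_triangle_darts[OF True] and down = down_triangle_darts[OF True]
    have b: "\<delta> (i + 1, z) = (i + 1, z)" by (rule next_vertex[OF down(2,3) fix1 fix0])
    have a: "\<delta> (i, z) = (i, z)" by (rule next_vertex[OF up(2,3) b fix0])
    have "\<delta> (i - 1, z + 1) = (i - 1, z + 1)"
      using next_vertex[OF down(1,2)[of "i - 1"]] a fix0 by simp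
    with a b show ?thesis by blast
  next
    case False
    note sq = square_darts[OF False]
    have a: "\<delta> (i, z) = (i, z)" by (rule next_vertex[OF sq(3,4) fix1 fix0])
    have b: "\<delta> (i + 1, z) = (i + 1, z)" by (rule next_vertex[OF sq(4,1) fix0 a])
    have "\<delta> (i - 1, z + 1) = (i - 1, z + 1)"
      using next_vertex[OF sq(2,3)[of "i - 1"]] a fix0 by simp
    with a b show ?thesis by blast
  qed
  then show "\<delta> (i, z) = (i, z)" "\<delta> (i + 1, z) = (i + 1, z)"
    "\<delta> (i - 1, z + 1) = (i - 1, z + 1)" by blast+
qed

lemma orientation_preserving_fixed_edge_row:
  assumes op: "orientation_preserving k \<delta>"
    and "\<delta> (i, y) = (i, y)" "\<delta> (i + 1, y) = (i + 1, y)"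
  shows "\<delta> (j, y) = (j, y)"
proof -
  have "\<delta> (j, y) = (j, y) \<and> \<delta> (j + 1, y) = (j + 1, y)"
  proof (induction j rule: int_induct[where k = i])
    case base
    show ?case using assms(2,3) ..
  next
    case (step1 j)
    then show ?case using orientation_preserving_fixed_edge_up(3)[OF op, of j y] by simp
  next
    case (step2 j)
    then show ?case using orientation_preserving_fixed_edge_down(3)[OF op, of j "y - 1"] by simp
  qed
  then show ?thesis ..
qed

theorem orientation_preserving_fixed_edge_id:
  assumes op: "orientation_preserving k \<delta>"
    and "\<delta> (i, y) = (i, y)" "\<delta> (i + 1, y) = (i + 1, y)"
  shows "\<delta> = id"
proof -
  have "\<forall>j. \<delta> (j, z) = (j, z)" for z
  proof (induction z rule: int_induct[where k = y])
    case base
    show ?case using orientation_preserving_fixed_edge_row[OF assms] by blast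
  next
    case (step1 z)
    then have "\<delta> (0, z + 1) = (0, z + 1)" "\<delta> (0 + 1, z + 1) = (0 + 1, z + 1)"
      using orientation_preserving_fixed_edge_up[OF op, of 0 z] by simp_all
    then show ?case using orientation_preserving_fixed_edge_row[OF op] by blast
  next
    case (step2 z)
    then have "\<delta> (0, z - 1) = (0, z - 1)" "\<delta> (0 + 1, z - 1) = (0 + 1, z - 1)"
      using orientation_preserving_fixed_edge_down[OF op, of 0 "z - 1"] by simp_all
    then show ?case using orientation_preserving_fixed_edge_row[OF op] by blast
  qed
  then show ?thesis by auto
qed

section \<open>Translations and half-turns\<close>

definition shift :: "int \<Rightarrow> int \<Rightarrow> int \<times> int \<Rightarrow> int \<times> int" where
  "shift c d p = (fst p + c, snd p + d)"

definition half_turn :: "int \<Rightarrow> int \<Rightarrow> int \<times> int \<Rightarrow> int \<times> int" where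
  "half_turn a b p = (a - fst p, b - snd p)"

lemma shift_apply [simp]: "shift c d (i, y) = (i + c, y + d)"
  by (simp add: shift_def)

lemma half_turn_apply [simp]: "half_turn a b (i, y) = (a - i, b - y)"
  by (simp add: half_turn_def)

lemma shift_comp [simp]: "shift a b \<circ> shift c d = shift (a + c) (b + d)"
  by (auto simp: shift_def)

lemma shift_zero [simp]: "shift 0 0 = id"
  by (auto simp: shift_def)

lemma half_turn_involution [simp]: "half_turn a b \<circ> half_turn a b = id"
  by (auto simp: half_turn_def)

lemma tri_layer_iff_dvd: "tri_layer k y \<longleftrightarrow> int k + 1 dvd y + 1"
proof -
  have "tri_layer k y \<longleftrightarrow> y mod (int k + 1) = int k mod (int k + 1)"
    unfolding tri_layer_def by simp
  also have "\<dots> \<longleftrightarrow> int k + 1 dvd y - int k"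
    by (rule mod_eq_dvd_iff)
  also have "\<dots> \<longleftrightarrow> int k + 1 dvd (y + 1) - (int k + 1)"
    by simp
  also have "\<dots> \<longleftrightarrow> int k + 1 dvd y + 1"
    by (rule dvd_diff_left_iff[OF dvd_refl])
  finally show ?thesis .
qed

lemma tri_layer_shift: "int k + 1 dvd d \<Longrightarrow> tri_layer k (y + d) \<longleftrightarrow> tri_layer k y"
  unfolding tri_layer_iff_dvd by (metis add.commute add.left_commute dvd_add_right_iff)

lemma tri_layer_half_turn: "int k + 1 dvd b + 1 \<Longrightarrow> tri_layer k (b - y - 1) \<longleftrightarrow> tri_layer k y"
proof -
  assume "int k + 1 dvd b + 1"
  moreover have "b - y - 1 + 1 = (b + 1) - (y + 1)"
    by simp
  ultimately show ?thesis
    unfolding tri_layer_iff_dvd by (metis dvd_diff_right_iff)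
qed

lemma shift_faces:
  "shift c d ` square i y = square (i + c) (y + d)"
  "shift c d ` up_triangle i y = up_triangle (i + c) (y + d)"
  "shift c d ` down_triangle i y = down_triangle (i + c) (y + d)"
  by (auto simp: square_def up_triangle_def down_triangle_def algebra_simps)

lemma half_turn_faces:
  "half_turn a b ` square i y = square (a - i - 1) (b - y - 1)"
  "half_turn a b ` up_triangle i y = down_triangle (a - i - 1) (b - y - 1)"
  "half_turn a b ` down_triangle i y = up_triangle (a - i - 1) (b - y - 1)"
  by (auto simp: square_def up_triangle_def down_triangle_def algebra_simps)

lemma orientation_preserving_shift:
  assumes "int k + 1 dvd d"
  shows "orientation_preserving k (shift c d)"
  unfolding orientation_preserving_def
proof clarify
  fix a b f assume "(a, b, f) \<in> KD k"
  then obtain i y where "cell_dart k i y a b f" unfolding KD_iff by blast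
  then have "cell_dart k (i + c) (y + d) (shift c d a) (shift c d b) (shift c d ` f)"
    unfolding cell_dart_def tri_layer_shift[OF assms]
    by (elim disjE conjE; simp add: shift_faces; simp add: algebra_simps)
  then show "(shift c d a, shift c d b, shift c d ` f) \<in> KD k" unfolding KD_iff by blast
qed

lemma orientation_preserving_half_turn:
  assumes "int k + 1 dvd b0 + 1"
  shows "orientation_preserving k (half_turn a0 b0)"
  unfolding orientation_preserving_def
proof clarify
  fix a b f assume "(a, b, f) \<in> KD k"
  then obtain i y where "cell_dart k i y a b f" unfolding KD_iff by blast
  then have "cell_dart k (a0 - i - 1) (b0 - y - 1)
      (half_turn a0 b0 a) (half_turn a0 b0 b) (half_turn a0 b0 ` f)"
    unfolding cell_dart_def tri_layer_half_turn[OF assms]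
    by (elim disjE conjE; simp add: half_turn_faces; simp add: algebra_simps)
  then show "(half_turn a0 b0 a, half_turn a0 b0 b, half_turn a0 b0 ` f) \<in> KD k"
    unfolding KD_iff by blast
qed

lemma shift_KE:
  assumes "int k + 1 dvd d" and "e \<in> KE k"
  shows "shift c d ` e \<in> KE k"
  using assms(2)[unfolded KE_iff]
proof (elim disjE exE conjE)
  fix i y assume "e = {(i, y), (i + 1, y)}"
  then have "shift c d ` e = {(i + c, y + d), (i + c + 1, y + d)}" by auto
  then show ?thesis unfolding KE_iff by blast
next
  fix i y assume "e = {(i, y), (i, y + 1)}"
  then have "shift c d ` e = {(i + c, y + d), (i + c, y + d + 1)}" by auto
  then show ?thesis unfolding KE_iff by blast
next
  fix i y assume "tri_layer k y" "e = {(i + 1, y), (i, y + 1)}"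
  then have "tri_layer k (y + d)" "shift c d ` e = {(i + c + 1, y + d), (i + c, y + d + 1)}"
    using tri_layer_shift[OF assms(1)] by auto
  then show ?thesis unfolding KE_iff by blast
qed

lemma half_turn_KE:
  assumes "int k + 1 dvd b + 1" and "e \<in> KE k"
  shows "half_turn a b ` e \<in> KE k"
  using assms(2)[unfolded KE_iff]
proof (elim disjE exE conjE)
  fix i y assume "e = {(i, y), (i + 1, y)}"
  then have "half_turn a b ` e = {(a - i - 1, b - y), (a - i - 1 + 1, b - y)}" by auto
  then show ?thesis unfolding KE_iff by blast
next
  fix i y assume "e = {(i, y), (i, y + 1)}"
  then have "half_turn a b ` e = {(a - i, b - y - 1), (a - i, b - y - 1 + 1)}" by auto
  then show ?thesis unfolding KE_iff by blast
next
  fix i y assume "tri_layer k y" "e = {(i + 1, y), (i, y + 1)}"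
  then have "tri_layer k (b - y - 1)"
    "half_turn a b ` e = {(a - i - 1 + 1, b - y - 1), (a - i - 1, b - y - 1 + 1)}"
    using tri_layer_half_turn[OF assms(1)] by auto
  then show ?thesis unfolding KE_iff by blast
qed

lemma shift_KF:
  assumes "int k + 1 dvd d" and "f \<in> KF k"
  shows "shift c d ` f \<in> KF k"
  using assms(2) unfolding KF_iff
  by (elim disjE exE conjE) (auto simp: shift_faces tri_layer_shift[OF assms(1)])

lemma half_turn_KF:
  assumes "int k + 1 dvd b + 1" and "f \<in> KF k"
  shows "half_turn a b ` f \<in> KF k"
  using assms(2) unfolding KF_iff
  by (elim disjE exE conjE) (auto simp: half_turn_faces tri_layer_half_turn[OF assms(1)])

definition tiling_symmetry :: "nat \<Rightarrow> (int \<times> int \<Rightarrow> int \<times> int) \<Rightarrow> bool" where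
  "tiling_symmetry k \<sigma> \<longleftrightarrow>
     (\<exists>c d. int k + 1 dvd d \<and> \<sigma> = shift c d) \<or>
     (\<exists>a b. int k + 1 dvd b + 1 \<and> \<sigma> = half_turn a b)"

lemma tiling_symmetry_inverse:
  assumes "tiling_symmetry k \<sigma>"
  obtains \<sigma>' where "tiling_symmetry k \<sigma>'" "\<sigma> \<circ> \<sigma>' = id" "\<sigma>' \<circ> \<sigma> = id"
  using assms unfolding tiling_symmetry_def
proof (elim disjE exE conjE)
  fix c d assume "int k + 1 dvd d" "\<sigma> = shift c d"
  then have "int k + 1 dvd - d" by simp
  then have "tiling_symmetry k (shift (- c) (- d))" unfolding tiling_symmetry_def by blast
  then show thesis by (rule that) (simp_all add: \<open>\<sigma> = shift c d\<close>)
next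
  fix a b assume "int k + 1 dvd b + 1" "\<sigma> = half_turn a b"
  then show thesis
    by (intro that[of \<sigma>]) (auto simp: tiling_symmetry_def)
qed

lemma tiling_symmetry_orientation_preserving:
  "tiling_symmetry k \<sigma> \<Longrightarrow> orientation_preserving k \<sigma>"
  unfolding tiling_symmetry_def
  using orientation_preserving_shift orientation_preserving_half_turn by blast

lemma tiling_symmetry_KE: "tiling_symmetry k \<sigma> \<Longrightarrow> e \<in> KE k \<Longrightarrow> \<sigma> ` e \<in> KE k"
  unfolding tiling_symmetry_def using shift_KE half_turn_KE by blast

lemma tiling_symmetry_KF: "tiling_symmetry k \<sigma> \<Longrightarrow> f \<in> KF k \<Longrightarrow> \<sigma> ` f \<in> KF k"
  unfolding tiling_symmetry_def using shift_KF half_turn_KF by blast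

lemma image_eq_of_inverse:
  assumes "\<And>x. x \<in> A \<Longrightarrow> f x \<in> A" "\<And>x. x \<in> A \<Longrightarrow> g x \<in> A" "\<And>x. x \<in> A \<Longrightarrow> f (g x) = x"
  shows "f ` A = A"
proof
  show "f ` A \<subseteq> A" using assms(1) by blast
  show "A \<subseteq> f ` A"
  proof
    fix x assume "x \<in> A"
    then have "x = f (g x)" "g x \<in> A" using assms(2,3) by simp_all
    then show "x \<in> f ` A" by blast
  qed
qed

lemma tiling_symmetry_map_aut:
  assumes "tiling_symmetry k \<sigma>"
  shows "map_aut UNIV (KE k) (KF k) \<sigma>"
proof -
  obtain \<sigma>' where \<sigma>': "tiling_symmetry k \<sigma>'" "\<sigma> \<circ> \<sigma>' = id" "\<sigma>' \<circ> \<sigma> = id"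
    using assms by (rule tiling_symmetry_inverse)
  have inverse: "\<sigma> ` \<sigma>' ` x = x" for x :: "(int \<times> int) set"
    using \<sigma>'(2) by (simp add: image_comp)
  have "(\<lambda>e. \<sigma> ` e) ` KE k = KE k"
    by (rule image_eq_of_inverse[where g = "\<lambda>e. \<sigma>' ` e"])
      (simp_all only: tiling_symmetry_KE[OF assms] tiling_symmetry_KE[OF \<sigma>'(1)] inverse)
  moreover have "(\<lambda>f. \<sigma> ` f) ` KF k = KF k"
    by (rule image_eq_of_inverse[where g = "\<lambda>f. \<sigma>' ` f"])
      (simp_all only: tiling_symmetry_KF[OF assms] tiling_symmetry_KF[OF \<sigma>'(1)] inverse)
  moreover have "bij \<sigma>"
    using \<sigma>' by (metis o_bij)
  ultimately show ?thesis unfolding map_aut_def by blast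
qed

section \<open>Classification of the automorphisms\<close>

lemma triangle_square_dart_cases:
  assumes "(a, b, f) \<in> KD k" "card f = 3" "(b, a, g) \<in> KD k" "card g = 4"
  shows "(\<exists>c y. tri_layer k y \<and> a = (c, y) \<and> b = (c + 1, y)) \<or>
    (\<exists>c y. tri_layer k y \<and> a = (c + 1, y + 1) \<and> b = (c, y + 1))"
proof -
  obtain i y where "cell_dart k i y a b f" using assms(1) unfolding KD_iff by blast
  then have triangle_dart: "tri_layer k y \<and>
      (a = (i, y) \<and> b = (i + 1, y) \<or> a = (i + 1, y) \<and> b = (i, y + 1) \<or>
      a = (i, y + 1) \<and> b = (i, y) \<or> a = (i + 1, y) \<and> b = (i + 1, y + 1) \<or>
      a = (i + 1, y + 1) \<and> b = (i, y + 1) \<or> a = (i, y + 1) \<and> b = (i + 1, y))"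
    using assms(2) unfolding cell_dart_def by auto
  obtain j z where "cell_dart k j z b a g" using assms(3) unfolding KD_iff by blast
  then have square_dart: "\<not> tri_layer k z \<and>
      (b = (j, z) \<and> a = (j + 1, z) \<or> b = (j + 1, z) \<and> a = (j + 1, z + 1) \<or>
      b = (j + 1, z + 1) \<and> a = (j, z + 1) \<or> b = (j, z + 1) \<and> a = (j, z))"
    using assms(4) unfolding cell_dart_def by auto
  from triangle_dart square_dart show ?thesis by (elim disjE conjE; simp)
qed

lemma right_inverse_eq_left_inverse: "\<tau>' \<circ> \<tau> = id \<Longrightarrow> \<tau> \<circ> \<gamma> = id \<Longrightarrow> \<gamma> = \<tau>'"
  by (metis comp_assoc comp_id id_comp)

lemma tiling_symmetry_eq_if_agree_on_edge:
  assumes op: "orientation_preserving k \<gamma>" and \<tau>: "tiling_symmetry k \<tau>"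
    and "\<gamma> (i, y) = \<tau> (i, y)" "\<gamma> (i + 1, y) = \<tau> (i + 1, y)"
  shows "\<gamma> = \<tau>"
proof -
  obtain \<tau>' where \<tau>': "tiling_symmetry k \<tau>'" "\<tau> \<circ> \<tau>' = id" "\<tau>' \<circ> \<tau> = id"
    using \<tau> by (rule tiling_symmetry_inverse)
  have "(\<tau>' \<circ> \<gamma>) (i, y) = (i, y)" "(\<tau>' \<circ> \<gamma>) (i + 1, y) = (i + 1, y)"
    using assms(3,4) pointfree_idE[OF \<tau>'(3)] by simp_all
  then have "\<tau>' \<circ> \<gamma> = id"
    by (rule orientation_preserving_fixed_edge_id[OF
        orientation_preserving_comp[OF tiling_symmetry_orientation_preserving[OF \<tau>'(1)] op]])
  with \<tau>'(2) show ?thesis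
    by (rule right_inverse_eq_left_inverse)
qed

text \<open>The dart from (0, k) to (1, k) has a triangle on its left and a square on its right. Its
  image under \<gamma> is a dart of the same kind, and the two kinds of such darts are reached from it by
  a translation and by a half-turn respectively; by rigidity \<gamma> is that symmetry.\<close>

theorem orientation_preserving_tiling_symmetry:
  assumes k: "k \<ge> 1" and op: "orientation_preserving k \<gamma>" and "inj \<gamma>"
  shows "tiling_symmetry k \<gamma>"
proof -
  define K where "K = int k"
  have tri: "tri_layer k K" and sq: "\<not> tri_layer k (K - 1)"
    using k unfolding K_def tri_layer_def by simp_all
  have left: "(\<gamma> (0, K), \<gamma> (1, K), \<gamma> ` up_triangle 0 K) \<in> KD k"
    using up_triangle_darts(1)[OF tri, of 0] op unfolding orientation_preserving_def by fastforce
  have right: "(\<gamma> (1, K), \<gamma> (0, K), \<gamma> ` square 0 (K - 1)) \<in> KD k"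
    using square_darts(3)[OF sq, of 0] op unfolding orientation_preserving_def by fastforce
  have "card (\<gamma> ` up_triangle 0 K) = 3" "card (\<gamma> ` square 0 (K - 1)) = 4"
    using card_image[OF inj_on_subset[OF \<open>inj \<gamma>\<close> subset_UNIV]] by simp_all
  from triangle_square_dart_cases[OF left this(1) right this(2)] show ?thesis
  proof (elim disjE exE conjE)
    fix c y assume "tri_layer k y" "\<gamma> (0, K) = (c, y)" "\<gamma> (1, K) = (c + 1, y)"
    have "int k + 1 dvd y - K"
      using dvd_diff[OF _ dvd_refl, of "int k + 1" "y + 1"] \<open>tri_layer k y\<close>
      unfolding tri_layer_iff_dvd K_def by simp
    then have \<tau>: "tiling_symmetry k (shift c (y - K))"
      unfolding tiling_symmetry_def by blast
    have "\<gamma> = shift c (y - K)"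
      by (rule tiling_symmetry_eq_if_agree_on_edge[OF op \<tau>, of 0 K])
        (simp_all add: \<open>\<gamma> (0, K) = (c, y)\<close> \<open>\<gamma> (1, K) = (c + 1, y)\<close>)
    with \<tau> show ?thesis by simp
  next
    fix c y assume "tri_layer k y" "\<gamma> (0, K) = (c + 1, y + 1)" "\<gamma> (1, K) = (c, y + 1)"
    have "int k + 1 dvd (y + 1 + K) + 1"
      using dvd_add[OF _ dvd_refl, of "int k + 1" "y + 1"] \<open>tri_layer k y\<close>
      unfolding tri_layer_iff_dvd K_def by (simp add: algebra_simps)
    then have \<tau>: "tiling_symmetry k (half_turn (c + 1) (y + 1 + K))"
      unfolding tiling_symmetry_def by blast
    have "\<gamma> = half_turn (c + 1) (y + 1 + K)"
      by (rule tiling_symmetry_eq_if_agree_on_edge[OF op \<tau>, of 0 K])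
        (simp_all add: \<open>\<gamma> (0, K) = (c + 1, y + 1)\<close> \<open>\<gamma> (1, K) = (c, y + 1)\<close>)
    with \<tau> show ?thesis by simp
  qed
qed

text \<open>The centre (a/2, b/2) is a vertex, the midpoint of an edge or the centre of a square.\<close>

lemma half_turn_fixes_cell:
  "(\<exists>v. half_turn a b v = v) \<or> (\<exists>e\<in>KE k. half_turn a b ` e = e) \<or>
    (\<exists>f\<in>KF k. half_turn a b ` f = f)"
proof -
  obtain i z where "a = 2 * i \<or> a = 2 * i + 1" "b = 2 * z \<or> b = 2 * z + 1"
    by (metis dvd_mult_div_cancel odd_two_times_div_two_succ)
  then consider "a = 2 * i" "b = 2 * z" | "a = 2 * i + 1" "b = 2 * z"
    | "a = 2 * i" "b = 2 * z + 1" | "a = 2 * i + 1" "b = 2 * z + 1"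
    by blast
  then show ?thesis
  proof cases
    case 1
    then have "half_turn a b (i, z) = (i, z)" by simp
    then show ?thesis by blast
  next
    case 2
    then have "half_turn a b ` {(i, z), (i + 1, z)} = {(i, z), (i + 1, z)}" by auto
    moreover have "{(i, z), (i + 1, z)} \<in> KE k" unfolding KE_iff by blast
    ultimately show ?thesis by blast
  next
    case 3
    then have "half_turn a b ` {(i, z), (i, z + 1)} = {(i, z), (i, z + 1)}" by auto
    moreover have "{(i, z), (i, z + 1)} \<in> KE k" unfolding KE_iff by blast
    ultimately show ?thesis by blast
  next
    case 4
    show ?thesis
    proof (cases "tri_layer k z")
      case True
      have "half_turn a b ` {(i + 1, z), (i, z + 1)} = {(i + 1, z), (i, z + 1)}" using 4 by auto
      moreover have "{(i + 1, z), (i, z + 1)} \<in> KE k" using True unfolding KE_iff by blast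
      ultimately show ?thesis by blast
    next
      case False
      have "half_turn a b ` square i z = square i z" using 4 by (simp add: half_turn_faces)
      moreover have "square i z \<in> KF k" using False unfolding KF_iff by blast
      ultimately show ?thesis by blast
    qed
  qed
qed

lemma torus_groupD:
  assumes "torus_group k \<Gamma>" and "\<gamma> \<in> \<Gamma>"
  shows "map_aut UNIV (KE k) (KF k) \<gamma>" and "orientation_preserving k \<gamma>" and "inv \<gamma> \<in> \<Gamma>"
    and "\<gamma> \<noteq> id \<Longrightarrow> (\<forall>v. \<gamma> v \<noteq> v) \<and> (\<forall>e\<in>KE k. \<gamma> ` e \<noteq> e) \<and> (\<forall>f\<in>KF k. \<gamma> ` f \<noteq> f)"
  using assms unfolding torus_group_def by simp_all

lemma torus_group_shift:
  assumes "k \<ge> 1" and \<Gamma>: "torus_group k \<Gamma>" and "\<gamma> \<in> \<Gamma>"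
  shows "\<exists>c d. int k + 1 dvd d \<and> \<gamma> = shift c d"
proof -
  have "inj \<gamma>"
    using torus_groupD(1)[OF \<Gamma> \<open>\<gamma> \<in> \<Gamma>\<close>] unfolding map_aut_def bij_betw_def by simp
  with \<open>k \<ge> 1\<close> torus_groupD(2)[OF \<Gamma> \<open>\<gamma> \<in> \<Gamma>\<close>] have "tiling_symmetry k \<gamma>"
    by (rule orientation_preserving_tiling_symmetry)
  moreover have "\<gamma> \<noteq> half_turn a b" for a b
  proof
    assume \<gamma>: "\<gamma> = half_turn a b"
    then have "\<gamma> (0, 0) \<noteq> (0, 0) \<or> \<gamma> (1, 0) \<noteq> (1, 0)" by simp
    then have "\<gamma> \<noteq> id" by auto
    then show False
      using torus_groupD(4)[OF \<Gamma> \<open>\<gamma> \<in> \<Gamma>\<close>] half_turn_fixes_cell[of a b k] unfolding \<gamma> by blast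
  qed
  ultimately show ?thesis unfolding tiling_symmetry_def by blast
qed

section \<open>Vertex types\<close>

definition on_triangle :: "'v set set \<Rightarrow> 'v \<Rightarrow> bool" where
  "on_triangle F v \<longleftrightarrow> (\<exists>f\<in>F. v \<in> f \<and> card f = 3)"

lemma on_triangle_map_aut:
  assumes \<phi>: "map_aut V E F \<phi>" and faces: "\<And>f. f \<in> F \<Longrightarrow> f \<subseteq> V" and "x \<in> V"
  shows "on_triangle F (\<phi> x) \<longleftrightarrow> on_triangle F x"
proof -
  have inj: "inj_on \<phi> V" and F: "(\<lambda>f. \<phi> ` f) ` F = F"
    using \<phi> unfolding map_aut_def bij_betw_def by blast+
  have image_face: "card (\<phi> ` f) = card f \<and> (\<phi> x \<in> \<phi> ` f \<longleftrightarrow> x \<in> f)" if "f \<in> F" for f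
    using faces[OF that] inj \<open>x \<in> V\<close> by (simp add: card_image inj_on_subset inj_on_image_mem_iff)
  show ?thesis
  proof
    assume "on_triangle F (\<phi> x)"
    then obtain f where "f \<in> F" "\<phi> x \<in> f" "card f = 3"
      unfolding on_triangle_def by blast
    moreover have "f \<in> (\<lambda>f. \<phi> ` f) ` F"
      using F \<open>f \<in> F\<close> by simp
    then obtain g where "g \<in> F" "f = \<phi> ` g"
      by blast
    ultimately show "on_triangle F x"
      unfolding on_triangle_def using image_face[OF \<open>g \<in> F\<close>] by auto
  next
    assume "on_triangle F x"
    then obtain g where "g \<in> F" "x \<in> g" "card g = 3"
      unfolding on_triangle_def by blast
    moreover have "\<phi> ` g \<in> F"
      using F \<open>g \<in> F\<close> by blast
    ultimately show "on_triangle F (\<phi> x)"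
      unfolding on_triangle_def using image_face[OF \<open>g \<in> F\<close>] by auto
  qed
qed

lemma on_triangle_K_iff: "on_triangle (KF k) (i, y) \<longleftrightarrow> tri_layer k y \<or> tri_layer k (y - 1)"
proof
  assume "on_triangle (KF k) (i, y)"
  then obtain f where "f \<in> KF k" "(i, y) \<in> f" "card f = 3"
    unfolding on_triangle_def by blast
  then obtain j z where "tri_layer k z" "(i, y) \<in> up_triangle j z \<or> (i, y) \<in> down_triangle j z"
    unfolding KF_iff by auto
  then have "tri_layer k z" "y = z \<or> y = z + 1"
    unfolding up_triangle_def down_triangle_def by auto
  then show "tri_layer k y \<or> tri_layer k (y - 1)"
    by auto
next
  assume "tri_layer k y \<or> tri_layer k (y - 1)"
  then show "on_triangle (KF k) (i, y)"
  proof
    assume "tri_layer k y"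
    then have "up_triangle i y \<in> KF k" unfolding KF_iff by blast
    moreover have "(i, y) \<in> up_triangle i y" by (simp add: up_triangle_def)
    ultimately show ?thesis unfolding on_triangle_def using card_up_triangle by blast
  next
    assume "tri_layer k (y - 1)"
    then have "down_triangle i (y - 1) \<in> KF k" unfolding KF_iff by blast
    moreover have "(i, y) \<in> down_triangle i (y - 1)" by (simp add: down_triangle_def)
    ultimately show ?thesis unfolding on_triangle_def using card_down_triangle by blast
  qed
qed

text \<open>For k = 2, 3 the rows of each vertex type fall into at most two residue classes modulo
  k + 1, and these are exchanged by half-turns.\<close>

theorem tiling_symmetry_transitive:
  assumes k: "k \<in> {2, 3}" and same_type: "on_triangle (KF k) v \<longleftrightarrow> on_triangle (KF k) w"
  obtains \<sigma> where "tiling_symmetry k \<sigma>" "\<sigma> v = w"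
proof -
  obtain i y i' y' where v: "v = (i, y)" and w: "w = (i', y')" by fastforce
  show thesis
  proof (cases "int k + 1 dvd y' - y")
    case True
    then have "tiling_symmetry k (shift (i' - i) (y' - y))"
      unfolding tiling_symmetry_def by blast
    then show thesis by (rule that) (simp add: v w)
  next
    case False
    from k have "int k + 1 dvd (y + y') + 1"
      using same_type False unfolding v w on_triangle_K_iff tri_layer_iff_dvd
      by (elim insertE emptyE; simp; presburger)
    then have "tiling_symmetry k (half_turn (i + i') (y + y'))"
      unfolding tiling_symmetry_def by blast
    then show thesis by (rule that) (simp add: v w)
  qed
qed

section \<open>The quotient map\<close>

lemma card_quotient_two_classes:
  assumes classes: "\<And>x. x \<in> V \<Longrightarrow> r `` {x} = {y \<in> V. P y \<longleftrightarrow> P x}"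
    and "a \<in> V" "P a" "b \<in> V" "\<not> P b"
  shows "card (V // r) = 2"
proof -
  have "V // r = {{y \<in> V. P y}, {y \<in> V. \<not> P y}}"
    unfolding quotient_def using classes assms(2-5) by auto
  moreover have "{y \<in> V. P y} \<noteq> {y \<in> V. \<not> P y}"
    using assms(2,3) by blast
  ultimately show ?thesis by simp
qed

lemma quotient_mapD:
  assumes "quotient_map k \<Gamma> \<eta> VX EdX FcX"
  shows "range \<eta> = VX" and "\<eta> a = \<eta> b \<longleftrightarrow> (\<exists>\<gamma>\<in>\<Gamma>. \<gamma> a = b)"
    and "EdX = (\<lambda>e. \<eta> ` e) ` KE k" and "FcX = (\<lambda>f. \<eta> ` f) ` KF k"
    and "f \<in> KF k \<Longrightarrow> inj_on \<eta> f" and "x \<in> FcX \<Longrightarrow> x \<subseteq> VX"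
  using assms unfolding quotient_map_def polyhedral_map_def by (simp_all del: split_paired_All)

lemma inv_shift: "inv (shift c d) = shift (- c) (- d)"
  by (rule inv_unique_comp) simp_all

locale torus_quotient =
  fixes k :: nat and \<Gamma> :: "(int \<times> int \<Rightarrow> int \<times> int) set"
    and \<eta> :: "int \<times> int \<Rightarrow> 'v" and VX :: "'v set" and EdX FcX :: "'v set set"
  assumes k: "k \<ge> 1" and \<Gamma>: "torus_group k \<Gamma>" and quotient: "quotient_map k \<Gamma> \<eta> VX EdX FcX"
begin

lemmas range_eta = quotient_mapD(1)[OF quotient]
  and eta_eq_iff = quotient_mapD(2)[OF quotient]
  and EdX_eq = quotient_mapD(3)[OF quotient]
  and FcX_eq = quotient_mapD(4)[OF quotient]
  and inj_on_face = quotient_mapD(5)[OF quotient]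
  and face_subset = quotient_mapD(6)[OF quotient]

lemma eta_cong:
  assumes \<sigma>: "tiling_symmetry k \<sigma>" and "\<eta> v = \<eta> w"
  shows "\<eta> (\<sigma> v) = \<eta> (\<sigma> w)"
proof -
  obtain \<gamma> where "\<gamma> \<in> \<Gamma>" "\<gamma> v = w"
    using eta_eq_iff \<open>\<eta> v = \<eta> w\<close> by blast
  obtain c d where \<gamma>: "\<gamma> = shift c d"
    using torus_group_shift[OF k \<Gamma> \<open>\<gamma> \<in> \<Gamma>\<close>] by blast
  have "shift (- c) (- d) \<in> \<Gamma>"
    using torus_groupD(3)[OF \<Gamma> \<open>\<gamma> \<in> \<Gamma>\<close>] by (simp add: \<gamma> inv_shift)
  from \<sigma> consider a b where "\<sigma> = shift a b" | a b where "\<sigma> = half_turn a b"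
    unfolding tiling_symmetry_def by blast
  then show ?thesis
  proof cases
    case 1
    then have "\<gamma> (\<sigma> v) = \<sigma> w" using \<open>\<gamma> v = w\<close> \<gamma> by (cases v) auto
    then show ?thesis using eta_eq_iff \<open>\<gamma> \<in> \<Gamma>\<close> by blast
  next
    case 2
    then have "shift (- c) (- d) (\<sigma> v) = \<sigma> w" using \<open>\<gamma> v = w\<close> \<gamma> by (cases v) auto
    then show ?thesis using eta_eq_iff \<open>shift (- c) (- d) \<in> \<Gamma>\<close> by blast
  qed
qed

lemma eta_tiling_symmetry_iff:
  assumes "tiling_symmetry k \<sigma>"
  shows "\<eta> (\<sigma> v) = \<eta> (\<sigma> w) \<longleftrightarrow> \<eta> v = \<eta> w"
proof
  obtain \<sigma>' where "tiling_symmetry k \<sigma>'" "\<sigma>' \<circ> \<sigma> = id"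
    using assms by (rule tiling_symmetry_inverse)
  then show "\<eta> (\<sigma> v) = \<eta> (\<sigma> w) \<Longrightarrow> \<eta> v = \<eta> w"
    using eta_cong[of \<sigma>' "\<sigma> v" "\<sigma> w"] by (simp add: pointfree_idE)
qed (rule eta_cong[OF assms])

text \<open>Here inv \<eta> chooses an arbitrary preimage; by eta_cong the value does not depend on
  the choice.\<close>

definition induced_map :: "(int \<times> int \<Rightarrow> int \<times> int) \<Rightarrow> 'v \<Rightarrow> 'v" where
  "induced_map \<sigma> x = \<eta> (\<sigma> (inv \<eta> x))"

lemma induced_map_eta:
  assumes "tiling_symmetry k \<sigma>"
  shows "induced_map \<sigma> (\<eta> v) = \<eta> (\<sigma> v)"
proof -
  have "\<eta> (inv \<eta> (\<eta> v)) = \<eta> v"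
    by (simp add: f_inv_into_f)
  then show ?thesis
    unfolding induced_map_def by (rule eta_cong[OF assms])
qed

theorem induced_map_aut:
  assumes \<sigma>: "tiling_symmetry k \<sigma>"
  shows "map_aut VX EdX FcX (induced_map \<sigma>)"
proof -
  obtain \<sigma>' where \<sigma>': "tiling_symmetry k \<sigma>'" "\<sigma> \<circ> \<sigma>' = id"
    using \<sigma> by (rule tiling_symmetry_inverse)
  have "inj_on (induced_map \<sigma>) VX"
  proof (rule inj_onI)
    fix x y assume "x \<in> VX" "y \<in> VX" and eq: "induced_map \<sigma> x = induced_map \<sigma> y"
    then obtain v w where "x = \<eta> v" "y = \<eta> w"
      using range_eta by blast
    with eq show "x = y"
      by (simp add: induced_map_eta[OF \<sigma>] eta_tiling_symmetry_iff[OF \<sigma>])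
  qed
  moreover have "induced_map \<sigma> ` VX = VX"
    unfolding range_eta[symmetric]
  proof (rule image_eq_of_inverse[where g = "induced_map \<sigma>'"])
    fix x assume "x \<in> range \<eta>"
    then obtain v where "x = \<eta> v" by blast
    then show "induced_map \<sigma> x \<in> range \<eta>" "induced_map \<sigma>' x \<in> range \<eta>"
      "induced_map \<sigma> (induced_map \<sigma>' x) = x"
      by (simp_all add: induced_map_eta \<sigma> \<sigma>'(1) pointfree_idE[OF \<sigma>'(2)])
  qed
  moreover have "(\<lambda>e. induced_map \<sigma> ` e) ` EdX = EdX"
  proof -
    have "(\<lambda>e. induced_map \<sigma> ` e) ` EdX = (\<lambda>e. \<eta> ` e) ` (\<lambda>e. \<sigma> ` e) ` KE k"
      by (simp add: EdX_eq image_image induced_map_eta[OF \<sigma>])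
    also have "\<dots> = EdX"
      using tiling_symmetry_map_aut[OF \<sigma>] unfolding map_aut_def EdX_eq by simp
    finally show ?thesis .
  qed
  moreover have "(\<lambda>f. induced_map \<sigma> ` f) ` FcX = FcX"
  proof -
    have "(\<lambda>f. induced_map \<sigma> ` f) ` FcX = (\<lambda>f. \<eta> ` f) ` (\<lambda>f. \<sigma> ` f) ` KF k"
      by (simp add: FcX_eq image_image induced_map_eta[OF \<sigma>])
    also have "\<dots> = FcX"
      using tiling_symmetry_map_aut[OF \<sigma>] unfolding map_aut_def FcX_eq by simp
    finally show ?thesis .
  qed
  ultimately show ?thesis
    unfolding map_aut_def bij_betw_def by blast
qed

lemma on_triangle_eta: "on_triangle FcX (\<eta> v) \<longleftrightarrow> on_triangle (KF k) v"
proof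
  assume "on_triangle FcX (\<eta> v)"
  then obtain t where "t \<in> KF k" "\<eta> v \<in> \<eta> ` t" "card (\<eta> ` t) = 3"
    unfolding on_triangle_def FcX_eq by blast
  then obtain w where "w \<in> t" "\<eta> w = \<eta> v" "card t = 3"
    using card_image[OF inj_on_face] by auto
  then have "on_triangle (KF k) w"
    using \<open>t \<in> KF k\<close> unfolding on_triangle_def by blast
  obtain \<gamma> where "\<gamma> \<in> \<Gamma>" "\<gamma> w = v"
    using eta_eq_iff \<open>\<eta> w = \<eta> v\<close> by blast
  then have "map_aut UNIV (KE k) (KF k) \<gamma>"
    using torus_groupD(1)[OF \<Gamma>] by blast
  with \<open>on_triangle (KF k) w\<close> show "on_triangle (KF k) v"
    using on_triangle_map_aut[of UNIV "KE k" "KF k" \<gamma> w] \<open>\<gamma> w = v\<close> by simp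
next
  assume "on_triangle (KF k) v"
  then obtain t where "t \<in> KF k" "v \<in> t" "card t = 3"
    unfolding on_triangle_def by blast
  then have "\<eta> ` t \<in> FcX" "\<eta> v \<in> \<eta> ` t" "card (\<eta> ` t) = 3"
    using card_image[OF inj_on_face] FcX_eq by auto
  then show "on_triangle FcX (\<eta> v)"
    unfolding on_triangle_def by blast
qed

lemma aut_orbit_eq:
  assumes "k \<in> {2, 3}" and "x \<in> VX"
  shows "aut_orbit_rel VX EdX FcX `` {x} = {y \<in> VX. on_triangle FcX y \<longleftrightarrow> on_triangle FcX x}"
proof (intro equalityI subsetI)
  fix y assume "y \<in> aut_orbit_rel VX EdX FcX `` {x}"
  then obtain \<phi> where "map_aut VX EdX FcX \<phi>" "\<phi> x = y" "y \<in> VX"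
    unfolding aut_orbit_rel_def by blast
  then show "y \<in> {y \<in> VX. on_triangle FcX y \<longleftrightarrow> on_triangle FcX x}"
    using on_triangle_map_aut[OF _ face_subset \<open>x \<in> VX\<close>] by blast
next
  fix y assume y: "y \<in> {y \<in> VX. on_triangle FcX y \<longleftrightarrow> on_triangle FcX x}"
  obtain v w where "x = \<eta> v" "y = \<eta> w"
    using range_eta \<open>x \<in> VX\<close> y by blast
  with y have "on_triangle (KF k) v \<longleftrightarrow> on_triangle (KF k) w"
    by (simp add: on_triangle_eta)
  with \<open>k \<in> {2, 3}\<close> obtain \<sigma> where "tiling_symmetry k \<sigma>" "\<sigma> v = w"
    by (rule tiling_symmetry_transitive)
  then have "map_aut VX EdX FcX (induced_map \<sigma>)" "induced_map \<sigma> x = y"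
    using induced_map_aut induced_map_eta \<open>x = \<eta> v\<close> \<open>y = \<eta> w\<close> by simp_all
  then show "y \<in> aut_orbit_rel VX EdX FcX `` {x}"
    unfolding aut_orbit_rel_def using \<open>x \<in> VX\<close> y by blast
qed

end

theorem theorem1:
  fixes k :: nat and \<Gamma> :: "(int \<times> int \<Rightarrow> int \<times> int) set"
    and \<eta> :: "int \<times> int \<Rightarrow> 'v" and VX :: "'v set" and EdX FcX :: "'v set set"
  assumes "k \<in> {2, 3}"
    and "torus_group k \<Gamma>"
    and "quotient_map k \<Gamma> \<eta> VX EdX FcX"
  shows "card (VX // aut_orbit_rel VX EdX FcX) = 2"
proof -
  interpret torus_quotient k \<Gamma> \<eta> VX EdX FcX
    using assms by unfold_locales auto
  have "on_triangle FcX (\<eta> (0, int k))" "\<not> on_triangle FcX (\<eta> (0, 1))"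
    using \<open>k \<in> {2, 3}\<close> by (auto simp: on_triangle_eta on_triangle_K_iff tri_layer_def)
  then show ?thesis
    using card_quotient_two_classes[OF aut_orbit_eq[OF \<open>k \<in> {2, 3}\<close>]] range_eta by blast
qed

end
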